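(* Let $\mathcal{H},\mathcal{K}$ be real or complex Hilbert spaces and let $S:\mathcal{H}\to\mathcal{K}$ and $T:\mathcal{K}\to\mathcal{H}$ be (not necessarily densely defined) surjective linear operators such that $$\langle Sx,y\rangle=\langle x,Ty\rangle\qquad \text{for all } x\in\operatorname{dom} S,\ y\in\operatorname{dom} T.$$ Then $S$ and $T$ are both densely defined operators such that $S^*=T$ and $T^*=S$.
   Context: Linear operators are defined on linear subspaces $\operatorname{dom}$ of the respective space; surjective means the range is the whole target space. *)

theory Defs
  imports "HOL-Analysis.Analysis"
begin

class complex_vector = real_vector +
  fixes scaleC :: "complex \<Rightarrow> 'a \<Rightarrow> 'a"
  assumes scaleC_add_right: "scaleC a (x + y) = scaleC a x + scaleC a y"
    and scaleC_add_left: "scaleC (a + b) x = scaleC a x + scaleC b x"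
    and scaleC_scaleC: "scaleC a (scaleC b x) = scaleC (a * b) x"
    and scaleC_one: "scaleC 1 x = x"
    and scaleR_scaleC: "scaleR r x = scaleC (complex_of_real r) x"

class complex_inner = complex_vector + real_normed_vector +
  fixes cinner :: "'a \<Rightarrow> 'a \<Rightarrow> complex"
  assumes cinner_commute: "cinner x y = cnj (cinner y x)"
    and cinner_add_left: "cinner (x + y) z = cinner x z + cinner y z"
    and cinner_scaleC_left: "cinner (scaleC r x) y = cnj r * cinner x y"
    and cinner_ge_zero: "Im (cinner x x) = 0 \<and> 0 \<le> Re (cinner x x)"
    and cinner_eq_zero_iff: "cinner x x = 0 \<longleftrightarrow> x = 0"
    and norm_eq_sqrt_cinner: "norm x = sqrt (Re (cinner x x))"

class chilbert_space = complex_inner + complete_space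

definition r_lin_op :: "'a::real_vector set \<Rightarrow> ('a \<Rightarrow> 'b::real_vector) \<Rightarrow> bool" where
  "r_lin_op D S \<longleftrightarrow> subspace D \<and>
     (\<forall>x\<in>D. \<forall>y\<in>D. S (x + y) = S x + S y) \<and> (\<forall>c. \<forall>x\<in>D. S (c *\<^sub>R x) = c *\<^sub>R S x)"

definition c_subspace :: "'a::complex_vector set \<Rightarrow> bool" where
  "c_subspace D \<longleftrightarrow> 0 \<in> D \<and> (\<forall>x\<in>D. \<forall>y\<in>D. x + y \<in> D) \<and> (\<forall>c. \<forall>x\<in>D. scaleC c x \<in> D)"

definition c_lin_op :: "'a::complex_vector set \<Rightarrow> ('a \<Rightarrow> 'b::complex_vector) \<Rightarrow> bool" where
  "c_lin_op D S \<longleftrightarrow> c_subspace D \<and>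
     (\<forall>x\<in>D. \<forall>y\<in>D. S (x + y) = S x + S y) \<and> (\<forall>c. \<forall>x\<in>D. S (scaleC c x) = scaleC c (S x))"

definition op_graph :: "'a set \<Rightarrow> ('a \<Rightarrow> 'b) \<Rightarrow> ('a \<times> 'b) set" where
  "op_graph E T = {(y, T y) | y. y \<in> E}"

text \<open>Graph of the adjoint of the operator S with domain D (a linear relation in general):
  (y, z) belongs to it iff <S x, y> = <x, z> for all x in D.\<close>
definition r_adjoint :: "'a::real_inner set \<Rightarrow> ('a \<Rightarrow> 'b::real_inner) \<Rightarrow> ('b \<times> 'a) set" where
  "r_adjoint D S = {(y, z). \<forall>x\<in>D. inner (S x) y = inner x z}"

definition c_adjoint :: "'a::complex_inner set \<Rightarrow> ('a \<Rightarrow> 'b::complex_inner) \<Rightarrow> ('b \<times> 'a) set" where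
  "c_adjoint D S = {(y, z). \<forall>x\<in>D. cinner (S x) y = cinner x z}"

end

theory Submission
  imports Defs
begin

(* If v is orthogonal to dom S, write v = T y and y = S x: then
   |y|^2 = <S x, y> = <x, T y> = <x, v> = 0, so v = T 0 = 0, and dom S is dense by the
   projection theorem. The same computation applied to y - y', where (y, z) lies in the adjoint
   relation of S and z = T y', shows y = y', so the adjoint of S is the graph of T.
   Only the real part of the inner product enters, and Re <x, y> is a real inner product
   inducing the same norm, so the complex case is an instance of the real argument. *)

definition inner_form :: "('a::real_normed_vector \<Rightarrow> 'a \<Rightarrow> real) \<Rightarrow> bool" where
  "inner_form B \<longleftrightarrow> bilinear B \<and> (\<forall>x y. B x y = B y x) \<and> (\<forall>x. B x x = (norm x)\<^sup>2)"

lemma inner_form_bilinear: "inner_form B \<Longrightarrow> bilinear B"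
  and inner_form_commute: "inner_form B \<Longrightarrow> B x y = B y x"
  and inner_form_self: "inner_form B \<Longrightarrow> B x x = (norm x)\<^sup>2"
  by (simp_all add: inner_form_def)

lemma inner_form_parallelogram:
  fixes B :: "'a::real_normed_vector \<Rightarrow> 'a \<Rightarrow> real" and x y :: 'a
  assumes "inner_form B"
  shows "(norm (x + y))\<^sup>2 + (norm (x - y))\<^sup>2 = 2 * (norm x)\<^sup>2 + 2 * (norm y)\<^sup>2"
proof -
  have "B x y = B y x" using assms by (rule inner_form_commute)
  then show ?thesis using inner_form_bilinear[OF assms]
    by (simp flip: inner_form_self[OF assms]
        add: bilinear_ladd bilinear_radd bilinear_lsub bilinear_rsub)
qed

(* Projection theorem: HOL-Analysis has closest points only in heine_borel spaces, so it is
   proved here from completeness and the parallelogram law. *)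

lemma convex_minimizing_sequence_Cauchy:
  fixes C :: "'a::real_normed_vector set"
  assumes parallelogram:
      "\<And>x y::'a. (norm (x + y))\<^sup>2 + (norm (x - y))\<^sup>2 = 2 * (norm x)\<^sup>2 + 2 * (norm y)\<^sup>2"
    and "convex C" and c: "\<And>n. c n \<in> C" and lim: "(\<lambda>n. dist w (c n)) \<longlonglongrightarrow> infdist w C"
  shows "Cauchy c"
proof (rule CauchyI)
  define d where "d = infdist w C"
  define excess where "excess n = (dist w (c n))\<^sup>2 - d\<^sup>2" for n
  have gap: "(norm (c m - c n))\<^sup>2 \<le> 2 * excess m + 2 * excess n" for m n
  proof -
    define mid where "mid = (1/2) *\<^sub>R c m + (1/2) *\<^sub>R c n"
    have "mid \<in> C" unfolding mid_def using \<open>convex C\<close> c by (intro convexD) auto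
    then have "d\<^sup>2 \<le> (dist w mid)\<^sup>2"
      unfolding d_def by (intro power_mono infdist_le infdist_nonneg)
    moreover have "(w - c m) + (w - c n) = 2 *\<^sub>R (w - mid)" "(w - c m) - (w - c n) = - (c m - c n)"
      by (simp_all add: mid_def algebra_simps scaleR_2)
    then have "(norm (c m - c n))\<^sup>2
        = 2 * (dist w (c m))\<^sup>2 + 2 * (dist w (c n))\<^sup>2 - 4 * (dist w mid)\<^sup>2"
      using parallelogram[of "w - c m" "w - c n"]
      by (simp add: dist_norm power_mult_distrib norm_minus_commute)
    ultimately show ?thesis by (simp add: excess_def)
  qed
  fix e :: real
  assume "0 < e"
  have "excess \<longlonglongrightarrow> d\<^sup>2 - d\<^sup>2"
    unfolding excess_def d_def by (intro tendsto_intros lim)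
  then have "\<forall>\<^sub>F n in sequentially. excess n < e\<^sup>2 / 4"
    using \<open>0 < e\<close> by (intro order_tendstoD) auto
  then obtain M where M: "\<And>n. n \<ge> M \<Longrightarrow> excess n < e\<^sup>2 / 4"
    unfolding eventually_sequentially by blast
  show "\<exists>M. \<forall>m\<ge>M. \<forall>n\<ge>M. norm (c m - c n) < e"
  proof (intro exI allI impI)
    fix m n assume "m \<ge> M" "n \<ge> M"
    then have "(norm (c m - c n))\<^sup>2 < e\<^sup>2" using gap[of m n] M[of m] M[of n] by linarith
    then show "norm (c m - c n) < e" using \<open>0 < e\<close> by (simp add: power_less_imp_less_base)
  qed
qed

lemma closest_point_exists_parallelogram:
  fixes C :: "'a::{real_normed_vector,complete_space} set"
  assumes parallelogram:
      "\<And>x y::'a. (norm (x + y))\<^sup>2 + (norm (x - y))\<^sup>2 = 2 * (norm x)\<^sup>2 + 2 * (norm y)\<^sup>2"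
    and "closed C" "convex C" "C \<noteq> {}"
  obtains p where "p \<in> C" "\<And>c. c \<in> C \<Longrightarrow> dist w p \<le> dist w c"
proof -
  define d where "d = infdist w C"
  have "\<exists>c\<in>C. dist w c < d + inverse (real (Suc n))" for n
    using \<open>C \<noteq> {}\<close> unfolding d_def infdist_notempty[OF \<open>C \<noteq> {}\<close>]
    by (subst cINF_less_iff [symmetric]) (auto intro: bdd_belowI2[where m = 0])
  then obtain c where c: "\<And>n. c n \<in> C" "\<And>n. dist w (c n) < d + inverse (real (Suc n))"
    by metis
  have lim: "(\<lambda>n. dist w (c n)) \<longlonglongrightarrow> d"
  proof (rule tendsto_sandwich)
    show "\<forall>\<^sub>F n in sequentially. d \<le> dist w (c n)" using c(1) by (simp add: d_def infdist_le)
    show "\<forall>\<^sub>F n in sequentially. dist w (c n) \<le> d + inverse (real (Suc n))"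
      using c(2) by (simp add: less_imp_le)
  qed (simp, rule LIMSEQ_inverse_real_of_nat_add)
  have "Cauchy c"
    using parallelogram \<open>convex C\<close> c(1) lim unfolding d_def by (rule convex_minimizing_sequence_Cauchy)
  then obtain p where p: "c \<longlonglongrightarrow> p" using Cauchy_convergent_iff convergent_def by blast
  show thesis
  proof
    show "p \<in> C" using closed_sequentially[OF \<open>closed C\<close> c(1) p] .
    have "dist w p = d" using LIMSEQ_unique[OF tendsto_dist[OF tendsto_const p] lim] .
    then show "dist w p \<le> dist w c" if "c \<in> C" for c using that by (simp add: d_def infdist_le)
  qed
qed

lemma linear_le_quadratic_imp_eq_0:
  fixes a N :: real
  assumes "\<And>t. 2 * t * a \<le> t\<^sup>2 * N"
  shows "a = 0"
proof -
  define k where "k = \<bar>N\<bar> + 1"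
  have "k > 0" by (simp add: k_def)
  have "2 * (a / k) * a \<le> (a / k)\<^sup>2 * N" by (rule assms)
  then have "2 * a\<^sup>2 * k \<le> a\<^sup>2 * N"
    using \<open>k > 0\<close> by (simp add: power2_eq_square field_simps)
  moreover have "a\<^sup>2 * N \<le> a\<^sup>2 * k" by (simp add: k_def mult_left_mono)
  ultimately have "a\<^sup>2 * k \<le> 0" by simp
  then show "a = 0" using \<open>k > 0\<close> by (simp add: mult_le_0_iff)
qed

lemma nearest_point_orthogonal:
  fixes B :: "'a::real_normed_vector \<Rightarrow> 'a \<Rightarrow> real"
  assumes B: "inner_form B" and nearest: "\<And>t. dist w p \<le> dist w (p + t *\<^sub>R m)"
  shows "B m (w - p) = 0"
proof (rule linear_le_quadratic_imp_eq_0)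
  fix t :: real
  define v where "v = w - p"
  have "(norm v)\<^sup>2 \<le> (norm (v - t *\<^sub>R m))\<^sup>2"
    using nearest[of t] by (simp add: v_def dist_norm diff_diff_eq power_mono)
  then have "B v v \<le> B (v - t *\<^sub>R m) (v - t *\<^sub>R m)"
    by (simp add: inner_form_self[OF B])
  then have "2 * t * B m v \<le> t\<^sup>2 * B m m"
    using inner_form_bilinear[OF B] inner_form_commute[OF B, of m v]
    by (simp add: bilinear_lsub bilinear_rsub bilinear_lmul bilinear_rmul
        power2_eq_square algebra_simps)
  then show "2 * t * B m (w - p) \<le> t\<^sup>2 * B m m" by (simp add: v_def)
qed

lemma subspace_dense_if_annihilator_trivial:
  fixes D :: "'a::{real_normed_vector,complete_space} set"
  assumes B: "inner_form B" and "subspace D"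
    and annihilator: "\<And>v. \<forall>x\<in>D. B x v = 0 \<Longrightarrow> v = 0"
  shows "closure D = UNIV"
proof -
  have "w \<in> closure D" for w
  proof -
    have "closure D \<noteq> {}" "convex (closure D)"
      using \<open>subspace D\<close> subspace_0 subspace_imp_convex convex_closure by blast+
    then obtain p where p: "p \<in> closure D"
      and nearest: "\<And>c. c \<in> closure D \<Longrightarrow> dist w p \<le> dist w c"
      using closest_point_exists_parallelogram[OF inner_form_parallelogram[OF B]] by blast
    have "B m (w - p) = 0" if "m \<in> D" for m
    proof (rule nearest_point_orthogonal[OF B])
      fix t :: real
      have "(+) (t *\<^sub>R m) ` D \<subseteq> D"
        using \<open>subspace D\<close> \<open>m \<in> D\<close> by (auto simp: subspace_add subspace_mul)
      then have "(+) (t *\<^sub>R m) ` closure D \<subseteq> closure D"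
        by (metis closure_mono closure_translation)
      then show "dist w p \<le> dist w (p + t *\<^sub>R m)"
        using p by (intro nearest) (auto simp: add.commute)
    qed
    then have "w - p = 0" using annihilator by blast
    then show ?thesis using p by simp
  qed
  then show ?thesis by blast
qed

lemma adjoint_pair_relation_in_graph:
  assumes BK: "inner_form BK" and "S ` D = UNIV" "T ` E = UNIV"
    and adj: "\<forall>x\<in>D. \<forall>y\<in>E. BK (S x) y = BH x (T y)"
    and rel: "\<forall>x\<in>D. BK (S x) y = BH x z"
  shows "y \<in> E \<and> z = T y"
proof -
  obtain y' where y': "y' \<in> E" "z = T y'" using \<open>T ` E = UNIV\<close> by (metis UNIV_I image_iff)
  obtain x where x: "x \<in> D" "S x = y - y'" using \<open>S ` D = UNIV\<close> by (metis UNIV_I image_iff)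
  have "BK (S x) y = BK (S x) y'" using rel adj x(1) y' by metis
  then have "BK (y - y') (y - y') = 0"
    using x(2) by (simp add: bilinear_rsub[OF inner_form_bilinear[OF BK]])
  then have "y = y'" by (simp add: inner_form_self[OF BK])
  then show ?thesis using y' by simp
qed

lemma adjoint_pair_dense_domain:
  fixes D :: "'a::{real_normed_vector,complete_space} set"
  assumes BH: "inner_form BH" and BK: "inner_form BK" and "subspace D" and "T 0 = 0"
    and surj: "S ` D = UNIV" "T ` E = UNIV"
    and adj: "\<forall>x\<in>D. \<forall>y\<in>E. BK (S x) y = BH x (T y)"
  shows "closure D = UNIV"
proof (rule subspace_dense_if_annihilator_trivial[OF BH \<open>subspace D\<close>])
  fix v assume "\<forall>x\<in>D. BH x v = 0"
  then have "\<forall>x\<in>D. BK (S x) 0 = BH x v"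
    by (simp add: bilinear_rzero[OF inner_form_bilinear[OF BK]])
  then have "v = T 0" using adjoint_pair_relation_in_graph[OF BK surj adj] by blast
  then show "v = 0" using \<open>T 0 = 0\<close> by simp
qed

lemma inner_form_inner: "inner_form (inner :: 'a::real_inner \<Rightarrow> 'a \<Rightarrow> real)"
  unfolding inner_form_def bilinear_def
  by (auto simp: inner_commute power2_norm_eq_inner inner_add_left inner_add_right intro!: linearI)

lemma Re_cinner_commute: "Re (cinner x y) = Re (cinner y (x::'a::complex_inner))"
  by (subst cinner_commute) simp

lemma inner_form_Re_cinner: "inner_form (\<lambda>x y::'a::complex_inner. Re (cinner x y))"
proof -
  have left: "linear (\<lambda>x. Re (cinner x y))" for y :: 'a
    by (rule linearI) (simp_all add: cinner_add_left scaleR_scaleC cinner_scaleC_left)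
  moreover have "linear (\<lambda>y. Re (cinner x y))" for x :: 'a
    using left[of x] by (subst Re_cinner_commute)
  moreover have "Re (cinner x x) = (norm x)\<^sup>2" for x :: 'a
    using cinner_ge_zero[of x] by (simp add: norm_eq_sqrt_cinner)
  ultimately show ?thesis
    unfolding inner_form_def bilinear_def using Re_cinner_commute by blast
qed

lemma r_lin_op_zero: "r_lin_op E T \<Longrightarrow> T 0 = 0"
  unfolding r_lin_op_def by (metis scale_zero_left subspace_0)

lemma c_subspace_imp_subspace: "c_subspace D \<Longrightarrow> subspace D"
  unfolding c_subspace_def subspace_def by (simp add: scaleR_scaleC)

lemma c_lin_op_zero: "c_lin_op E T \<Longrightarrow> T 0 = 0"
  unfolding c_lin_op_def c_subspace_def by (metis scaleR_scaleC scale_zero_left of_real_0)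

lemma r_adjoint_pair:
  fixes D :: "'a::{real_inner,complete_space} set" and S :: "'a \<Rightarrow> 'b::real_inner"
  assumes "r_lin_op D S" "r_lin_op E T" and surj: "S ` D = UNIV" "T ` E = UNIV"
    and adj: "\<forall>x\<in>D. \<forall>y\<in>E. inner (S x) y = inner x (T y)"
  shows "closure D = UNIV \<and> r_adjoint D S = op_graph E T"
proof
  show "closure D = UNIV"
    using assms by (intro adjoint_pair_dense_domain[OF inner_form_inner inner_form_inner])
      (auto simp: r_lin_op_def r_lin_op_zero)
  have "y \<in> E \<and> z = T y" if "(y, z) \<in> r_adjoint D S" for y z
    using that by (intro adjoint_pair_relation_in_graph[OF inner_form_inner surj adj])
      (simp add: r_adjoint_def)
  then show "r_adjoint D S = op_graph E T"
    using adj by (auto simp: r_adjoint_def op_graph_def)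
qed

lemma c_adjoint_pair:
  fixes D :: "'a::chilbert_space set" and S :: "'a \<Rightarrow> 'b::complex_inner"
  assumes "c_lin_op D S" "c_lin_op E T" and surj: "S ` D = UNIV" "T ` E = UNIV"
    and adj: "\<forall>x\<in>D. \<forall>y\<in>E. cinner (S x) y = cinner x (T y)"
  shows "closure D = UNIV \<and> c_adjoint D S = op_graph E T"
proof
  have adj_Re: "\<forall>x\<in>D. \<forall>y\<in>E. Re (cinner (S x) y) = Re (cinner x (T y))"
    using adj by simp
  show "closure D = UNIV"
    using assms adj_Re
    by (intro adjoint_pair_dense_domain[OF inner_form_Re_cinner inner_form_Re_cinner])
      (auto simp: c_lin_op_def c_lin_op_zero c_subspace_imp_subspace)
  have "y \<in> E \<and> z = T y" if "(y, z) \<in> c_adjoint D S" for y z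
    using that by (intro adjoint_pair_relation_in_graph[OF inner_form_Re_cinner surj adj_Re])
      (simp add: c_adjoint_def)
  then show "c_adjoint D S = op_graph E T"
    using adj by (auto simp: c_adjoint_def op_graph_def)
qed

theorem corollary3p5:
  shows "(\<forall>(D :: 'a::{real_inner, complete_space} set) (S :: 'a \<Rightarrow> 'b::{real_inner, complete_space})
            (E :: 'b set) (T :: 'b \<Rightarrow> 'a).
            r_lin_op D S \<and> r_lin_op E T \<and> S ` D = UNIV \<and> T ` E = UNIV \<and>
            (\<forall>x\<in>D. \<forall>y\<in>E. inner (S x) y = inner x (T y))
            \<longrightarrow> closure D = UNIV \<and> closure E = UNIV \<and>
                r_adjoint D S = op_graph E T \<and> r_adjoint E T = op_graph D S)
       \<and> (\<forall>(D :: 'c::chilbert_space set) (S :: 'c \<Rightarrow> 'd::chilbert_space)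
            (E :: 'd set) (T :: 'd \<Rightarrow> 'c).
            c_lin_op D S \<and> c_lin_op E T \<and> S ` D = UNIV \<and> T ` E = UNIV \<and>
            (\<forall>x\<in>D. \<forall>y\<in>E. cinner (S x) y = cinner x (T y))
            \<longrightarrow> closure D = UNIV \<and> closure E = UNIV \<and>
                c_adjoint D S = op_graph E T \<and> c_adjoint E T = op_graph D S)"
proof (rule conjI; intro allI impI; elim conjE)
  fix D :: "'a set" and S :: "'a \<Rightarrow> 'b" and E :: "'b set" and T :: "'b \<Rightarrow> 'a"
  assume "r_lin_op D S" "r_lin_op E T" "S ` D = UNIV" "T ` E = UNIV"
    and adj: "\<forall>x\<in>D. \<forall>y\<in>E. inner (S x) y = inner x (T y)"
  moreover from adj have "\<forall>y\<in>E. \<forall>x\<in>D. inner (T y) x = inner y (S x)"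
    by (simp add: inner_commute)
  ultimately show "closure D = UNIV \<and> closure E = UNIV \<and>
      r_adjoint D S = op_graph E T \<and> r_adjoint E T = op_graph D S"
    using r_adjoint_pair[of D S E T] r_adjoint_pair[of E T D S] by blast
next
  fix D :: "'c set" and S :: "'c \<Rightarrow> 'd" and E :: "'d set" and T :: "'d \<Rightarrow> 'c"
  assume "c_lin_op D S" "c_lin_op E T" "S ` D = UNIV" "T ` E = UNIV"
    and adj: "\<forall>x\<in>D. \<forall>y\<in>E. cinner (S x) y = cinner x (T y)"
  moreover from adj have "\<forall>y\<in>E. \<forall>x\<in>D. cinner (T y) x = cinner y (S x)"
    by (metis cinner_commute)
  ultimately show "closure D = UNIV \<and> closure E = UNIV \<and>
      c_adjoint D S = op_graph E T \<and> c_adjoint E T = op_graph D S"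
    using c_adjoint_pair[of D S E T] c_adjoint_pair[of E T D S] by blast
qed

end
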